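(* Let $q\ge3$ be a prime power and let $\ell_0,\ell_1,\dots$ be integers with $0\le\ell_i\le q-2$. Let $P_0=[0,\ell_0]\subseteq\mathbb{R}$ and $P_i=P_{i-1}\oplus[0,\ell_i]\subseteq\mathbb{R}^{i+1}$ for $i\ge1$. Then $R(P_i)\to0$ as $i\to\infty$.
   Context: The direct sum of integral convex polytopes $P\subseteq\mathbb{R}^n$ and $Q\subseteq\mathbb{R}^m$ both containing the origin is $P\oplus Q=\mathrm{conv}\big(\{(p,\mathbf{0}):p\in P\}\cup\{(\mathbf{0},y):y\in Q\}\big)\subseteq\mathbb{R}^{n+m}$. For an integral convex polytope $P\subseteq[0,q-2]^n$, $R(P)=|P\cap\mathbb{Z}^n|/(q-1)^n$. *)

theory Defs
  imports "HOL-Analysis.Analysis" "HOL-Number_Theory.Number_Theory"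
begin

text \<open>Points of R^n are represented as functions nat => real whose coordinates
  with index >= n vanish; a subset of R^n is a set of such functions.\<close>

definition in_dim :: "nat \<Rightarrow> (nat \<Rightarrow> real) \<Rightarrow> bool" where
  "in_dim n x \<longleftrightarrow> (\<forall>k\<ge>n. x k = 0)"

definition conv :: "(nat \<Rightarrow> real) set \<Rightarrow> (nat \<Rightarrow> real) set" where
  "conv S = {y. \<exists>F u. finite F \<and> F \<subseteq> S \<and> (\<forall>x\<in>F. 0 \<le> u x) \<and> sum u F = 1
                  \<and> y = (\<lambda>k. \<Sum>x\<in>F. u x * x k)}"

definition shift :: "nat \<Rightarrow> (nat \<Rightarrow> real) \<Rightarrow> (nat \<Rightarrow> real)" where
  "shift n y = (\<lambda>k. if k < n then 0 else y (k - n))"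

definition dsum :: "nat \<Rightarrow> (nat \<Rightarrow> real) set \<Rightarrow> (nat \<Rightarrow> real) set \<Rightarrow> (nat \<Rightarrow> real) set" where
  "dsum n P Q = conv (P \<union> shift n ` Q)"

definition seg :: "int \<Rightarrow> (nat \<Rightarrow> real) set" where
  "seg l = {x. 0 \<le> x 0 \<and> x 0 \<le> real_of_int l \<and> in_dim 1 x}"

fun Pseq :: "(nat \<Rightarrow> int) \<Rightarrow> nat \<Rightarrow> (nat \<Rightarrow> real) set" where
  "Pseq l 0 = seg (l 0)"
| "Pseq l (Suc i) = dsum (Suc i) (Pseq l i) (seg (l (Suc i)))"

definition lattice_points :: "nat \<Rightarrow> (nat \<Rightarrow> real) set \<Rightarrow> (nat \<Rightarrow> real) set" where
  "lattice_points n P = {x\<in>P. in_dim n x \<and> (\<forall>k<n. x k \<in> \<int>)}"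

definition Rval :: "nat \<Rightarrow> nat \<Rightarrow> (nat \<Rightarrow> real) set \<Rightarrow> real" where
  "Rval q n P = real (card (lattice_points n P)) / (real q - 1) ^ n"

end

theory Submission
  imports Defs "HOL-Real_Asymp.Real_Asymp"
begin

text \<open>Every P_i lies in the simplex {x \<ge> 0, x_0 + ... + x_i \<le> q - 2}, since each summand
  [0, l_j] does and that simplex is convex. A lattice point of this simplex is a list of
  i + 1 naturals with sum at most q - 2, and there are at most (i + 2)^(q-2) of these:
  polynomially many, against the exponential denominator (q - 1)^(i+1) \<ge> 2^(i+1).\<close>

definition scaled_simplex :: "nat \<Rightarrow> real \<Rightarrow> (nat \<Rightarrow> real) set" where
  "scaled_simplex n m = {x. in_dim n x \<and> (\<forall>k. 0 \<le> x k) \<and> (\<Sum>k<n. x k) \<le> m}"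

lemma scaled_simplex_mono:
  assumes "n \<le> n'"
  shows "scaled_simplex n m \<subseteq> scaled_simplex n' m"
proof
  fix x assume x: "x \<in> scaled_simplex n m"
  then have "(\<Sum>k<n'. x k) = (\<Sum>k<n. x k)"
    using assms by (intro sum.mono_neutral_right) (auto simp: scaled_simplex_def in_dim_def)
  with x assms show "x \<in> scaled_simplex n' m"
    by (auto simp: scaled_simplex_def in_dim_def)
qed

lemma conv_subset_simplex:
  assumes "S \<subseteq> scaled_simplex n m"
  shows "conv S \<subseteq> scaled_simplex n m"
proof
  fix y assume "y \<in> conv S"
  then obtain F u where F: "finite F" "F \<subseteq> S" "\<forall>x\<in>F. 0 \<le> u x" "sum u F = 1"
    and y: "y = (\<lambda>k. \<Sum>x\<in>F. u x * x k)" unfolding conv_def by blast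
  have xS: "x \<in> scaled_simplex n m" if "x \<in> F" for x using F(2) assms that by blast
  have "in_dim n y" unfolding in_dim_def y
    using xS by (auto simp: scaled_simplex_def in_dim_def intro!: sum.neutral)
  moreover have "\<forall>k. 0 \<le> y k" unfolding y
    using xS F(3) by (auto simp: scaled_simplex_def intro!: sum_nonneg)
  moreover have "(\<Sum>k<n. y k) \<le> m"
  proof -
    have "(\<Sum>k<n. y k) = (\<Sum>x\<in>F. u x * (\<Sum>k<n. x k))"
      unfolding y by (simp add: sum.swap[of _ "{..<n}"] sum_distrib_left)
    also have "\<dots> \<le> (\<Sum>x\<in>F. u x * m)"
      using xS F(3) by (intro sum_mono mult_left_mono) (auto simp: scaled_simplex_def)
    also have "\<dots> = m" using F(4) by (simp add: sum_distrib_right[symmetric])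
    finally show ?thesis .
  qed
  ultimately show "y \<in> scaled_simplex n m" by (simp add: scaled_simplex_def)
qed

lemma shift_simplex_subset: "shift n ` scaled_simplex k m \<subseteq> scaled_simplex (n + k) m"
proof
  fix z assume "z \<in> shift n ` scaled_simplex k m"
  then obtain x where x: "x \<in> scaled_simplex k m" and z: "z = shift n x" by blast
  have "(\<Sum>j<n + k. z j) = (\<Sum>j<k. x j)"
    by (simp add: z shift_def atLeast0LessThan[symmetric] sum.atLeastLessThan_shift_0[of _ n]
                  sum.atLeastLessThan_concat[of 0 n "n + k", symmetric] comp_def)
  with x show "z \<in> scaled_simplex (n + k) m"
    by (auto simp: z shift_def scaled_simplex_def in_dim_def)
qed

lemma seg_subset_simplex:
  assumes "real_of_int l \<le> m"
  shows "seg l \<subseteq> scaled_simplex 1 m"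
proof
  fix x assume x: "x \<in> seg l"
  have "0 \<le> x k" for k
    using x by (cases k) (auto simp: seg_def in_dim_def)
  with x assms show "x \<in> scaled_simplex 1 m" by (auto simp: seg_def scaled_simplex_def)
qed

lemma Pseq_subset_simplex:
  assumes "\<And>i. real_of_int (l i) \<le> m"
  shows "Pseq l i \<subseteq> scaled_simplex (Suc i) m"
proof (induction i)
  case 0
  show ?case using seg_subset_simplex[OF assms] by simp
next
  case (Suc i)
  have "Pseq l i \<subseteq> scaled_simplex (Suc (Suc i)) m"
    using Suc.IH scaled_simplex_mono[of "Suc i" "Suc (Suc i)" m] by simp
  moreover have "shift (Suc i) ` seg (l (Suc i)) \<subseteq> scaled_simplex (Suc (Suc i)) m"
    using seg_subset_simplex[OF assms] shift_simplex_subset[of "Suc i" 1 m] by fastforce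
  ultimately show ?case
    by (simp add: dsum_def conv_subset_simplex)
qed

definition bounded_sum_lists :: "nat \<Rightarrow> nat \<Rightarrow> nat list set" where
  "bounded_sum_lists n M = {xs. length xs = n \<and> sum_list xs \<le> M}"

lemma finite_bounded_sum_lists: "finite (bounded_sum_lists n M)"
proof -
  have "bounded_sum_lists n M \<subseteq> {xs. set xs \<subseteq> {0..M} \<and> length xs = n}"
    by (auto simp: bounded_sum_lists_def dest: member_le_sum_list)
  thus ?thesis using finite_lists_length_eq[of "{0..M}" n] finite_subset by blast
qed

lemma sum_powers_le_Suc_power: "(\<Sum>i<Suc M. (a::nat) ^ i) \<le> (a + 1) ^ M"
proof (induction M)
  case 0 then show ?case by simp
next
  case (Suc M)
  have "(\<Sum>i<Suc (Suc M). a ^ i) = 1 + a * (\<Sum>i<Suc M. a ^ i)"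
    by (simp only: sum.lessThan_Suc_shift power_0 power_Suc sum_distrib_left distrib_left mult_1_right)
  also have "\<dots> \<le> 1 + a * (a + 1) ^ M" using Suc by simp
  also have "\<dots> \<le> (a + 1) ^ M + a * (a + 1) ^ M" by simp
  finally show ?case by simp
qed

lemma card_bounded_sum_lists_le: "card (bounded_sum_lists n M) \<le> (n + 1) ^ M"
proof (induction n arbitrary: M)
  case 0
  have "bounded_sum_lists 0 M = {[]}" by (auto simp: bounded_sum_lists_def)
  then show ?case by simp
next
  case (Suc n)
  have split_head: "bounded_sum_lists (Suc n) M
      = (\<lambda>(j, xs). j # xs) ` (SIGMA j:{..<Suc M}. bounded_sum_lists n (M - j))"
  proof (intro equalityI subsetI)
    fix ys assume "ys \<in> bounded_sum_lists (Suc n) M"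
    then obtain j xs where "ys = j # xs" "length xs = n" "j + sum_list xs \<le> M"
      by (cases ys) (auto simp: bounded_sum_lists_def)
    thus "ys \<in> (\<lambda>(j, xs). j # xs) ` (SIGMA j:{..<Suc M}. bounded_sum_lists n (M - j))"
      by (auto simp: bounded_sum_lists_def intro!: image_eqI[of _ _ "(j, xs)"])
  qed (auto simp: bounded_sum_lists_def)
  have "card (bounded_sum_lists (Suc n) M)
      \<le> card (SIGMA j:{..<Suc M}. bounded_sum_lists n (M - j))"
    unfolding split_head by (rule card_image_le) (auto simp: finite_bounded_sum_lists)
  also have "\<dots> = (\<Sum>j<Suc M. card (bounded_sum_lists n (M - j)))"
    by (simp add: card_SigmaI finite_bounded_sum_lists)
  also have "\<dots> \<le> (\<Sum>j<Suc M. (n + 1) ^ (M - j))"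
    by (intro sum_mono Suc.IH)
  also have "\<dots> = (\<Sum>j<Suc M. (n + 1) ^ j)"
    using sum.nat_diff_reindex[of "\<lambda>j. (n + 1) ^ j" "Suc M"] by simp
  also have "\<dots> \<le> (Suc n + 1) ^ M"
    using sum_powers_le_Suc_power[where M = M and a = "n + 1"] by simp
  finally show ?case .
qed

lemma lattice_points_simplex_coords:
  assumes "x \<in> lattice_points n (scaled_simplex n m)" "k < n"
  shows "x k = real (nat \<lfloor>x k\<rfloor>)"
proof -
  from assms have "x k \<in> \<int>" "0 \<le> x k" by (auto simp: lattice_points_def scaled_simplex_def)
  thus ?thesis by (metis Ints_cases floor_of_int of_int_0_le_iff of_nat_nat)
qed

lemma lattice_points_simplex_bounds:
  "finite (lattice_points n (scaled_simplex n (real M)))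
   \<and> card (lattice_points n (scaled_simplex n (real M))) \<le> (n + 1) ^ M"
proof -
  let ?A = "lattice_points n (scaled_simplex n (real M))"
  let ?coords = "\<lambda>x. map (\<lambda>k. nat \<lfloor>x k\<rfloor>) [0..<n]"
  note coords = lattice_points_simplex_coords
  have "inj_on ?coords ?A"
  proof
    fix x y assume xy: "x \<in> ?A" "y \<in> ?A" "?coords x = ?coords y"
    show "x = y"
    proof
      fix k show "x k = y k"
      proof (cases "k < n")
        case True
        with xy(3) have "nat \<lfloor>x k\<rfloor> = nat \<lfloor>y k\<rfloor>"
          by (metis (no_types, lifting) add_0 diff_zero length_map length_upt nth_map nth_upt)
        then show ?thesis using coords[OF xy(1) True] coords[OF xy(2) True] by simp
      next
        case False
        then show ?thesis using xy by (auto simp: lattice_points_def in_dim_def)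
      qed
    qed
  qed
  moreover have "?coords ` ?A \<subseteq> bounded_sum_lists n M"
  proof
    fix ys assume "ys \<in> ?coords ` ?A"
    then obtain x where x: "x \<in> ?A" and ys: "ys = ?coords x" by blast
    have "real (sum_list ys) = (\<Sum>k<n. real (nat \<lfloor>x k\<rfloor>))"
      by (simp add: ys sum_list_sum_nth atLeast0LessThan)
    also have "\<dots> = (\<Sum>k<n. x k)" using coords[OF x] by simp
    also have "\<dots> \<le> real M" using x by (auto simp: lattice_points_def scaled_simplex_def)
    finally show "ys \<in> bounded_sum_lists n M" by (simp add: bounded_sum_lists_def ys)
  qed
  ultimately have "finite ?A" "card ?A \<le> card (bounded_sum_lists n M)"
    by (auto intro!: card_inj_on_le simp: finite_bounded_sum_lists)
       (meson finite_bounded_sum_lists finite_imageD finite_subset)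
  thus ?thesis using card_bounded_sum_lists_le[of n M] by simp
qed

lemma card_lattice_points_Pseq_le:
  assumes "\<And>i. real_of_int (l i) \<le> real M"
  shows "card (lattice_points (Suc i) (Pseq l i)) \<le> (i + 2) ^ M"
proof -
  let ?S = "lattice_points (Suc i) (scaled_simplex (Suc i) (real M))"
  have "lattice_points (Suc i) (Pseq l i) \<subseteq> ?S"
    using Pseq_subset_simplex[of l "real M" i, OF assms] by (auto simp: lattice_points_def)
  then have "card (lattice_points (Suc i) (Pseq l i)) \<le> card ?S"
    using lattice_points_simplex_bounds by (intro card_mono) auto
  also have "\<dots> \<le> (i + 2) ^ M"
    using lattice_points_simplex_bounds[of "Suc i" M] by simp
  finally show ?thesis .
qed

theorem mainTheorem9:
  fixes q :: nat and l :: "nat \<Rightarrow> int"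
  assumes "primepow q" and "q \<ge> 3"
    and "\<And>i. 0 \<le> l i" and "\<And>i. l i \<le> int q - 2"
  shows "(\<lambda>i. Rval q (Suc i) (Pseq l i)) \<longlonglongrightarrow> 0"
proof (rule tendsto_sandwich[OF _ _ tendsto_const])
  define M where "M = q - 2"
  have "real_of_int (l i) \<le> real M" for i
    using assms(2) assms(4)[of i] by (simp add: M_def of_nat_diff)
  then have card_le: "real (card (lattice_points (Suc i) (Pseq l i))) \<le> (real i + 2) ^ M" for i
    using card_lattice_points_Pseq_le[of l M i] by (metis of_nat_le_iff of_nat_numeral of_nat_add of_nat_power)
  have q: "2 \<le> real q - 1" using assms(2) by simp
  have "Rval q (Suc i) (Pseq l i) \<le> (real i + 2) ^ M / 2 ^ Suc i" for i
    unfolding Rval_def using q card_le[of i]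
    by (intro frac_le power_mono) auto
  then show "\<forall>\<^sub>F i in sequentially. Rval q (Suc i) (Pseq l i) \<le> (real i + 2) ^ M / 2 ^ Suc i"
    by simp
  show "\<forall>\<^sub>F i in sequentially. 0 \<le> Rval q (Suc i) (Pseq l i)"
    using assms(2) by (simp add: Rval_def)
  show "(\<lambda>i::nat. (real i + 2) ^ M / 2 ^ Suc i) \<longlonglongrightarrow> 0"
    by real_asymp
qed

end
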